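(* Let $d\ge 3$, $\lambda>0$, $\rho_0=o(1)$, $\mu=\rho_0/(d+\lambda)$. Let $a,b,c\ge0$ be a trajectory of the spectral gradient flow reduced dynamics \[ \dot a=-2\,\mathrm{sgn}(g_{w_\star})\sqrt a,\quad \dot b=-2\,\mathrm{sgn}(g_v)\sqrt b,\quad \dot c=-2\,\mathrm{sgn}(g_\perp)\sqrt c, \] with $a(0)=b(0)=c(0)=\mu$, where $r=a+(1+\lambda)b+(d-2)c$, $g_{w_\star}=4(r+2a-3)$, $g_v=4(1+\lambda)(r+2(1+\lambda)b-1)$, $g_\perp=4(r+2c-1)$, and $\mathrm{sgn}(0)=0$. Let $T_1'=\inf\{t\ge0: r(t)+2(1+\lambda)b(t)\ge1\}$ and $\alpha=\sqrt a$, $\beta=\sqrt b$, $\gamma=\sqrt c$. Then, for $d$ large enough, for all $t\in[0,T_1']$, \[ \alpha(t)=\beta(t)=\gamma(t)=\sqrt\mu+t,\quad\text{equivalently}\quad a(t)=b(t)=c(t)=(\sqrt\mu+t)^2, \] and $T_1'=\Theta((d+\lambda)^{-1/2})$.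
   Context: These ODEs describe the population spectral gradient flow $\dot W=-\mathrm{polar}(\nabla_W\mathcal L(W))$ for the phase-retrieval model $y=(x^\top w_\star)^2+\nu$, $x\sim\mathcal N(0,I_d+\lambda vv^\top)$ with $v\perp w_\star$ unit vectors, network $f_W(x)=\sum_{j=1}^d(w_j^\top x)^2$, in the coordinates $WW^\top=a\,w_\star w_\star^\top+b\,vv^\top+c(I-w_\star w_\star^\top-vv^\top)$; $\mathrm{polar}(A)=A(A^\top A)^{-1/2}$. *)

theory Defs
  imports "HOL-Analysis.Analysis"
begin

definition r_val :: "real \<Rightarrow> nat \<Rightarrow> real \<Rightarrow> real \<Rightarrow> real \<Rightarrow> real" where
  "r_val lam d A B C = A + (1 + lam) * B + (real d - 2) * C"

definition g_w :: "real \<Rightarrow> nat \<Rightarrow> real \<Rightarrow> real \<Rightarrow> real \<Rightarrow> real" where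
  "g_w lam d A B C = 4 * (r_val lam d A B C + 2 * A - 3)"

definition g_v :: "real \<Rightarrow> nat \<Rightarrow> real \<Rightarrow> real \<Rightarrow> real \<Rightarrow> real" where
  "g_v lam d A B C = 4 * (1 + lam) * (r_val lam d A B C + 2 * (1 + lam) * B - 1)"

definition g_perp :: "real \<Rightarrow> nat \<Rightarrow> real \<Rightarrow> real \<Rightarrow> real \<Rightarrow> real" where
  "g_perp lam d A B C = 4 * (r_val lam d A B C + 2 * C - 1)"

definition stopq :: "real \<Rightarrow> nat \<Rightarrow> (real \<Rightarrow> real) \<Rightarrow> (real \<Rightarrow> real) \<Rightarrow> (real \<Rightarrow> real) \<Rightarrow> real \<Rightarrow> real" where
  "stopq lam d a b c t = r_val lam d (a t) (b t) (c t) + 2 * (1 + lam) * b t"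

definition T1p :: "real \<Rightarrow> nat \<Rightarrow> (real \<Rightarrow> real) \<Rightarrow> (real \<Rightarrow> real) \<Rightarrow> (real \<Rightarrow> real) \<Rightarrow> real" where
  "T1p lam d a b c = Inf {t. 0 \<le> t \<and> stopq lam d a b c t \<ge> 1}"

text \<open>A trajectory of the reduced spectral-gradient-flow dynamics (sgn 0 = 0 is Isabelle's sgn)
  started at a = b = c = mu: a, b, c are nonnegative and continuous on [0,oo), and the ODEs hold
  (right derivative at t = 0) at every time t >= 0 up to the first time the stopping
  quantity reaches 1.\<close>
definition sgf_traj :: "real \<Rightarrow> nat \<Rightarrow> real \<Rightarrow> (real \<Rightarrow> real) \<Rightarrow> (real \<Rightarrow> real) \<Rightarrow> (real \<Rightarrow> real) \<Rightarrow> bool" where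
  "sgf_traj lam d mu a b c \<longleftrightarrow>
     a 0 = mu \<and> b 0 = mu \<and> c 0 = mu \<and>
     (\<forall>t\<ge>0. a t \<ge> 0 \<and> b t \<ge> 0 \<and> c t \<ge> 0) \<and>
     continuous_on {0..} a \<and> continuous_on {0..} b \<and> continuous_on {0..} c \<and>
     (\<forall>t\<ge>0. (\<forall>s\<in>{0..t}. stopq lam d a b c s < 1) \<longrightarrow>
        (a has_real_derivative (- 2 * sgn (g_w lam d (a t) (b t) (c t)) * sqrt (a t))) (at t within {0..}) \<and>
        (b has_real_derivative (- 2 * sgn (g_v lam d (a t) (b t) (c t)) * sqrt (b t))) (at t within {0..}) \<and>
        (c has_real_derivative (- 2 * sgn (g_perp lam d (a t) (b t) (c t)) * sqrt (c t))) (at t within {0..}))"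

end

theory Submission
  imports Defs
begin

text \<open>While r + 2(1+lam) b < 1 the gradient g_v is negative, so b grows at the maximal rate of the
  spectral flow and sqrt b = sqrt mu + t. The coordinates a and c can grow at most at that rate, so
  a, c <= b; this already forces g_w < 0 and g_perp < 0, hence a and c grow at the maximal rate as
  well. On the diagonal a = b = c the stopping quantity equals (d + 2 + 3 lam)(sqrt mu + t)^2, so
  T1' = (d + 2 + 3 lam)^(-1/2) - sqrt mu, which is of order (d + lam)^(-1/2) once rho0 <= 1/16.\<close>

lemma first_hitting_time:
  fixes f :: "real \<Rightarrow> real"
  assumes cont: "continuous_on {0..} f" and hit: "{t. 0 \<le> t \<and> y \<le> f t} \<noteq> {}"
  shows "0 \<le> Inf {t. 0 \<le> t \<and> y \<le> f t}" and "y \<le> f (Inf {t. 0 \<le> t \<and> y \<le> f t})"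
    and "\<And>s. 0 \<le> s \<Longrightarrow> s < Inf {t. 0 \<le> t \<and> y \<le> f t} \<Longrightarrow> f s < y"
proof -
  let ?S = "{t. 0 \<le> t \<and> y \<le> f t}"
  have "?S = {0..} \<inter> f -` {y..}" by auto
  then have "closed ?S" using continuous_closed_preimage[OF cont] by simp
  moreover have bdd: "bdd_below ?S" by (auto intro: bdd_belowI[where m=0])
  ultimately have "Inf ?S \<in> ?S" by (intro closed_contains_Inf hit)
  then show "0 \<le> Inf ?S" "y \<le> f (Inf ?S)" by simp_all
  show "f s < y" if "0 \<le> s" "s < Inf ?S" for s
  proof (rule ccontr)
    assume "\<not> f s < y"
    with that(1) have "s \<in> ?S" by simp
    then have "Inf ?S \<le> s" using bdd by (rule cInf_lower)
    with that(2) show False by simp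
  qed
qed

lemma le_left_endpoint_if_deriv_nonpos_above:
  fixes f :: "real \<Rightarrow> real"
  assumes cont: "continuous_on {a..b} f"
    and der: "\<And>u. a < u \<Longrightarrow> u < b \<Longrightarrow> f a < f u \<Longrightarrow>
                  \<exists>D. (f has_real_derivative D) (at u) \<and> D \<le> 0"
    and t: "t \<in> {a..b}"
  shows "f t \<le> f a"
proof (rule ccontr)
  assume above: "\<not> f t \<le> f a"
  define S where "S = {a..t} \<inter> f -` {..f a}"
  have "closed S"
    unfolding S_def using cont t by (intro continuous_closed_preimage) (auto intro: continuous_on_subset)
  moreover have "a \<in> S" and bdd: "bdd_above S"
    using t unfolding S_def by (auto intro: bdd_aboveI[where M=t])
  ultimately have "Sup S \<in> S" by (intro closed_contains_Sup) auto
  then obtain t' where t': "t' = Sup S" "a \<le> t'" "t' \<le> t" "f t' \<le> f a"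
    unfolding S_def by auto
  have after: "f a < f u" if "t' < u" "u \<le> t" for u
  proof (rule ccontr)
    assume "\<not> f a < f u"
    with that t' have "u \<in> S" unfolding S_def by simp
    then have "u \<le> t'" unfolding \<open>t' = Sup S\<close> using bdd by (rule cSup_upper)
    with that(1) show False by simp
  qed
  have "t' \<noteq> t" using t' above by blast
  with t' have "t' < t" by simp
  have "f t \<le> f t'"
  proof (rule DERIV_nonpos_imp_decreasing_open[of t' t f])
    show "t' \<le> t" using \<open>t' < t\<close> by simp
    show "continuous_on {t'..t} f" using cont t t' by (auto intro: continuous_on_subset)
    fix u assume "t' < u" "u < t"
    then show "\<exists>D. (f has_real_derivative D) (at u) \<and> D \<le> 0"
      using t t' by (intro der after) auto
  qed
  then show False using t' above by simp
qed

lemma sqrt_minus_ident_has_derivative: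
  assumes "(x has_real_derivative D) (at s)" and "0 < x s"
  shows "((\<lambda>u. sqrt (x u) - u) has_real_derivative D / (2 * sqrt (x s)) - 1) (at s)"
proof -
  have "((\<lambda>u. sqrt (x u) - u) has_real_derivative inverse (sqrt (x s)) / 2 * D - 1) (at s)"
    by (intro DERIV_diff DERIV_chain2[OF DERIV_real_sqrt[OF assms(2)] assms(1)] DERIV_ident)
  then show ?thesis by (simp add: field_simps)
qed

lemma sgn_flow_sqrt_le:
  fixes x g :: "real \<Rightarrow> real"
  assumes cont: "continuous_on {0..T} x" and pos: "0 < x 0"
    and flow: "\<And>s. 0 < s \<Longrightarrow> s < T \<Longrightarrow>
                 (x has_real_derivative - 2 * sgn (g s) * sqrt (x s)) (at s)"
    and t: "t \<in> {0..T}"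
  shows "sqrt (x t) \<le> sqrt (x 0) + t"
proof -
  have "(\<lambda>u. sqrt (x u) - u) t \<le> (\<lambda>u. sqrt (x u) - u) 0"
  proof (rule le_left_endpoint_if_deriv_nonpos_above[OF _ _ t])
    show "continuous_on {0..T} (\<lambda>u. sqrt (x u) - u)"
      using cont by (intro continuous_intros)
  next
    fix u assume u: "0 < u" "u < T" and "sqrt (x 0) - 0 < sqrt (x u) - u"
    moreover have "0 < sqrt (x 0)" using pos by simp
    ultimately have "0 < sqrt (x u)" by linarith
    then have xu: "0 < x u" by simp
    have "- 2 * sgn (g u) * sqrt (x u) / (2 * sqrt (x u)) - 1 = - sgn (g u) - 1"
      using xu by simp
    also have "\<dots> \<le> 0" by (simp add: sgn_real_def)
    finally show "\<exists>D. ((\<lambda>u. sqrt (x u) - u) has_real_derivative D) (at u) \<and> D \<le> 0"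
      using sqrt_minus_ident_has_derivative[OF flow[OF u] xu] by blast
  qed
  then show ?thesis by simp
qed

lemma sgn_flow_sqrt_eq:
  fixes x g :: "real \<Rightarrow> real"
  assumes cont: "continuous_on {0..T} x" and pos: "0 < x 0"
    and nonneg: "\<And>s. 0 \<le> s \<Longrightarrow> s \<le> T \<Longrightarrow> 0 \<le> x s"
    and flow: "\<And>s. 0 < s \<Longrightarrow> s < T \<Longrightarrow>
                 (x has_real_derivative - 2 * sgn (g s) * sqrt (x s)) (at s)"
    and neg: "\<And>s. 0 < s \<Longrightarrow> s < T \<Longrightarrow> g s < 0"
    and t: "t \<in> {0..T}"
  shows "sqrt (x t) = sqrt (x 0) + t"
proof -
  have grow: "(x has_real_derivative 2 * sqrt (x s)) (at s)" if "0 < s" "s < T" for s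
    using flow[OF that] neg[OF that] by simp
  have x_pos: "0 < x u" if "u \<in> {0..T}" for u
  proof -
    have "x 0 \<le> x u"
    proof (rule DERIV_nonneg_imp_increasing_open[of 0 u x])
      show "continuous_on {0..u} x" using cont that by (auto intro: continuous_on_subset)
    qed (use that grow nonneg in force)+
    then show ?thesis using pos by simp
  qed
  show ?thesis
  proof (cases "t = 0")
    case False
    then have "0 < t" using t by simp
    have "(\<lambda>u. sqrt (x u) - u) t = (\<lambda>u. sqrt (x u) - u) 0"
    proof (rule DERIV_isconst_end[OF \<open>0 < t\<close>])
      show "continuous_on {0..t} (\<lambda>u. sqrt (x u) - u)"
        using cont t by (auto intro!: continuous_intros intro: continuous_on_subset)
    next
      fix u assume u: "0 < u" "u < t"
      then have "0 < x u" using x_pos t by simp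
      then show "((\<lambda>u. sqrt (x u) - u) has_real_derivative 0) (at u)"
        using sqrt_minus_ident_has_derivative[OF grow] u t by fastforce
    qed
    then show ?thesis by simp
  qed simp
qed

lemma g_v_eq_stopq: "g_v lam d (a t) (b t) (c t) = 4 * (1 + lam) * (stopq lam d a b c t - 1)"
  unfolding g_v_def stopq_def by simp

lemma g_w_neg:
  assumes "r_val lam d A B C + 2 * (1 + lam) * B < 1" and "A \<le> B" and "0 \<le> lam * B"
  shows "g_w lam d A B C < 0"
  using assms unfolding g_w_def by (simp add: algebra_simps)

lemma g_perp_neg:
  assumes "r_val lam d A B C + 2 * (1 + lam) * B < 1" and "C \<le> B" and "0 \<le> lam * B"
  shows "g_perp lam d A B C < 0"
  using assms unfolding g_perp_def by (simp add: algebra_simps)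

lemma stopq_diagonal:
  assumes "a t = v" and "b t = v" and "c t = v"
  shows "stopq lam d a b c t = (real d + 2 + 3 * lam) * v"
  using assms unfolding stopq_def r_val_def by (simp add: algebra_simps)

lemma continuous_on_stopq:
  assumes "sgf_traj lam d mu a b c"
  shows "continuous_on {0..} (stopq lam d a b c)"
  using assms unfolding sgf_traj_def stopq_def[abs_def] r_val_def by (intro continuous_intros) auto

lemma sgf_traj_has_derivative_before_stop:
  assumes traj: "sgf_traj lam d mu a b c" and "0 < t" and "t < T"
    and below: "\<And>s. 0 \<le> s \<Longrightarrow> s < T \<Longrightarrow> stopq lam d a b c s < 1"
  shows "(a has_real_derivative - 2 * sgn (g_w lam d (a t) (b t) (c t)) * sqrt (a t)) (at t)"
    and "(b has_real_derivative - 2 * sgn (g_v lam d (a t) (b t) (c t)) * sqrt (b t)) (at t)"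
    and "(c has_real_derivative - 2 * sgn (g_perp lam d (a t) (b t) (c t)) * sqrt (c t)) (at t)"
proof -
  have at: "at t within {0..} = at t" using at_within_interior[of t "{0..}"] \<open>0 < t\<close> by simp
  have "\<forall>s\<in>{0..t}. stopq lam d a b c s < 1" using below \<open>t < T\<close> by simp
  with traj less_imp_le[OF \<open>0 < t\<close>] show
    "(a has_real_derivative - 2 * sgn (g_w lam d (a t) (b t) (c t)) * sqrt (a t)) (at t)"
    "(b has_real_derivative - 2 * sgn (g_v lam d (a t) (b t) (c t)) * sqrt (b t)) (at t)"
    "(c has_real_derivative - 2 * sgn (g_perp lam d (a t) (b t) (c t)) * sqrt (c t)) (at t)"
    unfolding sgf_traj_def at[symmetric] by blast+
qed

lemma sgf_traj_before_stop:
  assumes lam: "0 < lam" and mu: "0 < mu" and traj: "sgf_traj lam d mu a b c"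
    and below: "\<And>s. 0 \<le> s \<Longrightarrow> s < T \<Longrightarrow> stopq lam d a b c s < 1"
    and t: "t \<in> {0..T}"
  shows "a t = (sqrt mu + t)\<^sup>2 \<and> b t = (sqrt mu + t)\<^sup>2 \<and> c t = (sqrt mu + t)\<^sup>2"
proof -
  have init: "a 0 = mu" "b 0 = mu" "c 0 = mu"
    and nonneg: "\<And>s. 0 \<le> s \<Longrightarrow> 0 \<le> a s \<and> 0 \<le> b s \<and> 0 \<le> c s"
    using traj unfolding sgf_traj_def by auto
  have cont: "continuous_on {0..T} a" "continuous_on {0..T} b" "continuous_on {0..T} c"
    using traj unfolding sgf_traj_def by (auto intro: continuous_on_subset)
  have flow_a: "(a has_real_derivative - 2 * sgn (g_w lam d (a s) (b s) (c s)) * sqrt (a s)) (at s)"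
    and flow_b: "(b has_real_derivative - 2 * sgn (g_v lam d (a s) (b s) (c s)) * sqrt (b s)) (at s)"
    and flow_c: "(c has_real_derivative - 2 * sgn (g_perp lam d (a s) (b s) (c s)) * sqrt (c s)) (at s)"
    if "0 < s" "s < T" for s
    using sgf_traj_has_derivative_before_stop[OF traj that below] by simp_all
  have stop: "r_val lam d (a s) (b s) (c s) + 2 * (1 + lam) * b s < 1" if "0 < s" "s < T" for s
    using below[of s] that unfolding stopq_def by simp
  have b_eq: "sqrt (b s) = sqrt mu + s" if "s \<in> {0..T}" for s
  proof (rule sgn_flow_sqrt_eq[OF cont(2), where g="\<lambda>s. g_v lam d (a s) (b s) (c s)",
        unfolded init, OF mu _ flow_b _ that])
    show "g_v lam d (a s) (b s) (c s) < 0" if "0 < s" "s < T" for s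
      using below[of s] that lam by (simp add: g_v_eq_stopq mult_pos_neg)
  qed (use nonneg in auto)
  have a_le_b: "a s \<le> b s" and c_le_b: "c s \<le> b s" if "s \<in> {0..T}" for s
  proof -
    have "sqrt (a s) \<le> sqrt (b s)" "sqrt (c s) \<le> sqrt (b s)"
      using sgn_flow_sqrt_le[OF cont(1) _ flow_a that] sgn_flow_sqrt_le[OF cont(3) _ flow_c that]
        b_eq[OF that] init mu by simp_all
    then show "a s \<le> b s" "c s \<le> b s" by simp_all
  qed
  have a_eq: "sqrt (a s) = sqrt mu + s" if "s \<in> {0..T}" for s
  proof (rule sgn_flow_sqrt_eq[OF cont(1), where g="\<lambda>s. g_w lam d (a s) (b s) (c s)",
        unfolded init, OF mu _ flow_a _ that])
    show "g_w lam d (a s) (b s) (c s) < 0" if "0 < s" "s < T" for s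
      using g_w_neg[OF stop[OF that] a_le_b] that lam nonneg[of s] by simp
  qed (use nonneg in auto)
  have c_eq: "sqrt (c s) = sqrt mu + s" if "s \<in> {0..T}" for s
  proof (rule sgn_flow_sqrt_eq[OF cont(3), where g="\<lambda>s. g_perp lam d (a s) (b s) (c s)",
        unfolded init, OF mu _ flow_c _ that])
    show "g_perp lam d (a s) (b s) (c s) < 0" if "0 < s" "s < T" for s
      using g_perp_neg[OF stop[OF that] c_le_b] that lam nonneg[of s] by simp
  qed (use nonneg in auto)
  show ?thesis
    using a_eq[OF t] b_eq[OF t] c_eq[OF t] nonneg[of t] t by (metis atLeastAtMost_iff real_sqrt_pow2)
qed

lemma sgf_traj_reaches_stop:
  assumes lam: "0 < lam" and mu: "0 < mu" and traj: "sgf_traj lam d mu a b c"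
  shows "{t. 0 \<le> t \<and> 1 \<le> stopq lam d a b c t} \<noteq> {}"
proof
  assume never: "{t. 0 \<le> t \<and> 1 \<le> stopq lam d a b c t} = {}"
  then have "a 1 = (sqrt mu + 1)\<^sup>2 \<and> b 1 = (sqrt mu + 1)\<^sup>2 \<and> c 1 = (sqrt mu + 1)\<^sup>2"
    by (intro sgf_traj_before_stop[OF lam mu traj, of 1]) force+
  then have "stopq lam d a b c 1 = (real d + 2 + 3 * lam) * (sqrt mu + 1)\<^sup>2"
    by (intro stopq_diagonal) auto
  moreover have "1 \<le> (real d + 2 + 3 * lam) * (sqrt mu + 1)\<^sup>2"
  proof (rule order.trans[OF _ mult_mono])
    show "1 \<le> (sqrt mu + 1)\<^sup>2" using mu by (intro one_le_power) simp
  qed (use lam in auto)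
  ultimately have "1 \<le> stopq lam d a b c 1" by (simp only:)
  then have "1 \<in> {t. 0 \<le> t \<and> 1 \<le> stopq lam d a b c t}" by simp
  with never show False by blast
qed

lemma sgf_traj_T1p:
  assumes "0 < lam" and "0 < mu" and traj: "sgf_traj lam d mu a b c"
  shows "0 \<le> T1p lam d a b c" and "1 \<le> stopq lam d a b c (T1p lam d a b c)"
    and "\<And>s. 0 \<le> s \<Longrightarrow> s < T1p lam d a b c \<Longrightarrow> stopq lam d a b c s < 1"
  unfolding T1p_def
  by (fact first_hitting_time[OF continuous_on_stopq[OF traj] sgf_traj_reaches_stop[OF assms]])+

lemma sgf_traj_until_T1p:
  assumes lam: "0 < lam" and mu: "0 < mu" and traj: "sgf_traj lam d mu a b c"
    and t: "t \<in> {0..T1p lam d a b c}"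
  shows "a t = (sqrt mu + t)\<^sup>2 \<and> b t = (sqrt mu + t)\<^sup>2 \<and> c t = (sqrt mu + t)\<^sup>2"
  using sgf_traj_before_stop[OF lam mu traj sgf_traj_T1p(3)[OF lam mu traj] t] .

lemma T1p_eq:
  assumes lam: "0 < lam" and mu: "0 < mu" and traj: "sgf_traj lam d mu a b c"
    and small: "(real d + 2 + 3 * lam) * mu \<le> 1"
  shows "T1p lam d a b c = 1 / sqrt (real d + 2 + 3 * lam) - sqrt mu"
proof -
  define k where "k = real d + 2 + 3 * lam"
  define T where "T = T1p lam d a b c"
  have k: "0 < k" unfolding k_def using lam by simp
  have T0: "0 \<le> T" and hit: "1 \<le> stopq lam d a b c T"
    and before: "\<And>s. 0 \<le> s \<Longrightarrow> s < T \<Longrightarrow> stopq lam d a b c s < 1"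
    using sgf_traj_T1p[OF lam mu traj] unfolding T_def by auto
  have diagonal: "stopq lam d a b c t = k * (sqrt mu + t)\<^sup>2" if "t \<in> {0..T}" for t
    using sgf_traj_until_T1p[OF lam mu traj that[unfolded T_def]] unfolding k_def
    by (intro stopq_diagonal) auto
  have below_iff: "k * (sqrt mu + t)\<^sup>2 < 1 \<longleftrightarrow> t < 1 / sqrt k - sqrt mu" if "0 \<le> t" for t
  proof -
    have "k * (sqrt mu + t)\<^sup>2 = (sqrt k * (sqrt mu + t))\<^sup>2"
      using k by (simp add: power_mult_distrib)
    also have "\<dots> < 1 \<longleftrightarrow> sqrt k * (sqrt mu + t) < 1"
      using that mu k by (simp add: abs_square_less_1)
    also have "\<dots> \<longleftrightarrow> sqrt mu + t < 1 / sqrt k"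
      using k by (simp add: pos_less_divide_eq mult.commute)
    also have "\<dots> \<longleftrightarrow> t < 1 / sqrt k - sqrt mu"
      by auto
    finally show ?thesis .
  qed
  have "sqrt k * sqrt mu \<le> 1"
    using small unfolding k_def[symmetric] by (simp add: real_sqrt_mult[symmetric])
  then have "0 \<le> 1 / sqrt k - sqrt mu"
    using k by (simp add: field_simps)
  have "\<not> T < 1 / sqrt k - sqrt mu"
    using hit diagonal[of T] below_iff[OF T0] T0 by simp
  moreover have "\<not> 1 / sqrt k - sqrt mu < T"
    using before[OF \<open>0 \<le> 1 / sqrt k - sqrt mu\<close>] diagonal below_iff \<open>0 \<le> 1 / sqrt k - sqrt mu\<close>
    by fastforce
  ultimately show ?thesis unfolding T_def k_def by simp
qed

lemma first_phase_time_bounds: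
  fixes lam rho :: real and d :: nat
  assumes lam: "0 < lam" and d: "1 \<le> d" and rho: "0 < rho" "rho \<le> 1/16"
  defines "L \<equiv> real d + lam" and "k \<equiv> real d + 2 + 3 * lam"
  shows "k * (rho / L) \<le> 1"
    and "1/4 / sqrt L \<le> 1 / sqrt k - sqrt (rho / L)"
    and "1 / sqrt k - sqrt (rho / L) \<le> 1 / sqrt L"
proof -
  have L: "0 < L" and kL: "L \<le> k" "k \<le> 4 * L"
    unfolding L_def k_def using lam d by simp_all
  have "k * (rho / L) \<le> 4 * L * (rho / L)"
    using kL rho L by (intro mult_right_mono) simp_all
  also have "\<dots> = 4 * rho" using L by simp
  finally show "k * (rho / L) \<le> 1" using rho by simp
  have sqrt_kL: "sqrt L \<le> sqrt k" "sqrt k \<le> 2 * sqrt L"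
    using real_sqrt_le_mono[OF kL(1)] real_sqrt_le_mono[OF kL(2)] by (simp_all add: real_sqrt_mult)
  have "1 / (2 * sqrt L) \<le> 1 / sqrt k"
    using sqrt_kL L by (intro frac_le) simp_all
  moreover have "sqrt rho \<le> sqrt ((1/4)\<^sup>2)"
    using rho by (intro real_sqrt_le_mono) (simp add: power2_eq_square)
  then have "sqrt rho / sqrt L \<le> 1/4 / sqrt L"
    using L by (intro divide_right_mono) simp_all
  then have "sqrt (rho / L) \<le> 1/4 / sqrt L"
    by (simp only: real_sqrt_divide)
  ultimately show "1/4 / sqrt L \<le> 1 / sqrt k - sqrt (rho / L)" by simp
  have "1 / sqrt k \<le> 1 / sqrt L"
    using sqrt_kL L by (intro frac_le) simp_all
  moreover have "0 \<le> sqrt (rho / L)" using rho L by simp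
  ultimately show "1 / sqrt k - sqrt (rho / L) \<le> 1 / sqrt L" by linarith
qed

theorem lemmaC1:
  fixes lam :: real and rho0 :: "nat \<Rightarrow> real"
  assumes "lam > 0"
    and "\<And>d. rho0 d > 0"
    and "rho0 \<longlonglongrightarrow> 0"
  shows "\<exists>D C1 C2. C1 > 0 \<and> C2 > 0 \<and>
    (\<forall>d\<ge>D. d \<ge> 3 \<longrightarrow>
      (\<forall>a b c. sgf_traj lam d (rho0 d / (real d + lam)) a b c \<longrightarrow>
        (let mu = rho0 d / (real d + lam); T = T1p lam d a b c in
          {t. 0 \<le> t \<and> stopq lam d a b c t \<ge> 1} \<noteq> {} \<and>
          (\<forall>t\<in>{0..T}. sqrt (a t) = sqrt mu + t \<and> sqrt (b t) = sqrt mu + t \<and>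
                         sqrt (c t) = sqrt mu + t \<and>
                         a t = (sqrt mu + t)\<^sup>2 \<and> b t = (sqrt mu + t)\<^sup>2 \<and> c t = (sqrt mu + t)\<^sup>2) \<and>
          C1 / sqrt (real d + lam) \<le> T \<and> T \<le> C2 / sqrt (real d + lam))))"
proof -
  obtain N where N: "\<And>n. N \<le> n \<Longrightarrow> rho0 n < 1/16"
    using order_tendstoD(2)[OF assms(3), of "1/16"] unfolding eventually_sequentially by auto
  show ?thesis
  proof (rule exI[of _ N], rule exI[of _ "1/4"], rule exI[of _ 1], intro conjI allI impI, goal_cases)
    case (3 d a b c)
    define mu where "mu = rho0 d / (real d + lam)"
    have d: "1 \<le> d" and rho: "0 < rho0 d" "rho0 d \<le> 1/16"
      using assms(2) N 3 by (auto intro: less_imp_le)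
    have mu: "0 < mu" unfolding mu_def using rho assms(1) by simp
    have traj: "sgf_traj lam d mu a b c" using 3 unfolding mu_def by simp
    note bounds = first_phase_time_bounds[OF assms(1) d rho, folded mu_def]
    have "T1p lam d a b c = 1 / sqrt (real d + 2 + 3 * lam) - sqrt mu"
      using T1p_eq[OF assms(1) mu traj] bounds(1) by simp
    then show ?case
      unfolding Let_def mu_def[symmetric]
      using sgf_traj_reaches_stop[OF assms(1) mu traj] sgf_traj_until_T1p[OF assms(1) mu traj]
        bounds(2,3) mu by auto
  qed simp_all
qed

end
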